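(* Let $n\ge1$, let $F$ be a permutation of $\mathbb{F}_{2^n}$ with Carlitz rank $m$, and let $c\in\mathbb{F}_{2^n}$ with $c\neq1$. Then ${}_c\Delta_F\le m+2$.
   Context: Every permutation $F$ of $\mathbb{F}_{2^n}$ can be written, for some $m\ge0$ and $a_0,\dots,a_{m+1}\in\mathbb{F}_{2^n}$ with $a_0,a_2,\dots,a_m\neq0$, as $F(x)=(\cdots((a_0x+a_1)^{2^n-2}+a_2)^{2^n-2}\cdots+a_m)^{2^n-2}+a_{m+1}$. The Carlitz rank of $F$ is the least such $m$. For $F:\mathbb{F}_{2^n}\to\mathbb{F}_{2^n}$ and $c\in\mathbb{F}_{2^n}$, ${}_cD_aF(x)=F(x+a)+cF(x)$; ${}_c\Delta_F(a,b)$ is the number of $x\in\mathbb{F}_{2^n}$ with ${}_cD_aF(x)=b$; and ${}_c\Delta_F=\max\{{}_c\Delta_F(a,b): a,b\in\mathbb{F}_{2^n},\ a\neq 0 \text{ if } c=1\}$. *)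

theory Defs
  imports Main "HOL-Library.Cardinality"
begin

text \<open>The field F_{2^n} is modelled as a finite field type 'a with CARD('a) = 2^n.
  The exponent 2^n - 2 is CARD('a) - 2.\<close>

text \<open>Carlitz form: given a0, a1 and the list [a2, ..., a_(m+1)] (of length m),
  compute (...((a0 x + a1)^(q-2) + a2)^(q-2) ... + a_m)^(q-2) + a_(m+1).\<close>
definition carlitz_form :: "'a::{field,finite} \<Rightarrow> 'a \<Rightarrow> 'a list \<Rightarrow> 'a \<Rightarrow> 'a" where
  "carlitz_form a0 a1 as x =
     foldl (\<lambda>y a. y ^ (CARD('a) - 2) + a) (a0 * x + a1) as"

definition has_carlitz_rep :: "('a::{field,finite} \<Rightarrow> 'a) \<Rightarrow> nat \<Rightarrow> bool" where
  "has_carlitz_rep F m \<longleftrightarrow>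
     (\<exists>a0 a1 as. a0 \<noteq> 0 \<and> length as = m \<and> (\<forall>i. i + 1 < m \<longrightarrow> as ! i \<noteq> 0) \<and>
        F = carlitz_form a0 a1 as)"

definition carlitz_rank :: "('a::{field,finite} \<Rightarrow> 'a) \<Rightarrow> nat" where
  "carlitz_rank F = (LEAST m. has_carlitz_rep F m)"

definition c_diff_count :: "('a::{field,finite} \<Rightarrow> 'a) \<Rightarrow> 'a \<Rightarrow> 'a \<Rightarrow> 'a \<Rightarrow> nat" where
  "c_diff_count F c a b = card {x. F (x + a) + c * F x = b}"

definition c_diff_uniformity :: "('a::{field,finite} \<Rightarrow> 'a) \<Rightarrow> 'a \<Rightarrow> nat" where
  "c_diff_uniformity F c =
     Max {c_diff_count F c a b | a b. a \<noteq> 0 \<or> c \<noteq> 1}"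

end

(*
  In characteristic 2 the equation F (x + a) + c F x = b says that F (x + a) is the image of
  F x under the Moebius transformation y |-> c y + b, whose matrix has trace c + 1 \<noteq> 0.
  Write F as an affine map followed by m maps y |-> 1/y + e (such a representation exists,
  since transpositions have one). Peeling off the outermost map conjugates the Moebius matrix,
  which keeps its trace, and costs at most one solution: the conjugated relation can only fail
  at the zero z of the inner map and at z + a, and if both were solutions the transformation
  would swap two points and so have trace 0. For the remaining affine map the relation is a
  nonzero quadratic equation, with at most 2 roots.
*)
theory Submission
  imports Defs "HOL-Number_Theory.Residues" "HOL-Combinatorics.Permutations"
    "HOL-Computational_Algebra.Polynomial"
begin

section \<open>Finite fields\<close>

lemma power_card_minus_one_eq_1:
  fixes x :: "'a::{field,finite}"
  assumes "x \<noteq> 0"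
  shows "x ^ (CARD('a) - 1) = 1"
proof -
  let ?U = "UNIV - {0::'a}"
  have "(\<Prod>y\<in>?U. x * y) = (\<Prod>y\<in>?U. y)"
    by (rule prod.reindex_bij_witness[of _ "\<lambda>y. y / x" "\<lambda>y. x * y"]) (use assms in auto)
  moreover have "(\<Prod>y\<in>?U. x * y) = x ^ card ?U * (\<Prod>y\<in>?U. y)"
    by (simp add: prod.distrib)
  moreover have "(\<Prod>y\<in>?U. y) \<noteq> 0"
    by simp
  moreover have "card ?U = CARD('a) - 1"
    by (simp add: card_Diff_singleton)
  ultimately show ?thesis
    by simp
qed

lemma power_card_minus_2_eq_inverse:
  fixes x :: "'a::{field,finite}"
  assumes "CARD('a) \<ge> 3"
  shows "x ^ (CARD('a) - 2) = inverse x"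
proof (cases "x = 0")
  case False
  have "CARD('a) - 1 = Suc (CARD('a) - 2)"
    using assms by simp
  then have "x * x ^ (CARD('a) - 2) = 1"
    using power_card_minus_one_eq_1[OF False] by simp
  then show ?thesis
    by (rule inverse_unique[symmetric])
qed (use assms in simp)

lemma CHAR_eq_2_if_card_power_of_2:
  assumes "CARD('a::field) = 2 ^ n"
  shows "CHAR('a) = 2"
proof -
  have "finite (UNIV :: 'a set)"
    by (rule card_ge_0_finite) (simp add: assms)
  then have "prime CHAR('a)"
    by (simp add: finite_imp_CHAR_pos prime_CHAR_semidom)
  moreover have "CHAR('a) dvd 2 ^ n"
    using CHAR_dvd_CARD[where 'a='a] assms by simp
  ultimately show ?thesis
    by (metis prime_dvd_power primes_dvd_imp_eq two_is_prime_nat)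
qed

lemma add_self_CHAR_2:
  assumes "CHAR('a::ring_1) = 2"
  shows "x + x = (0::'a)"
  using uminus_CHAR_2[OF assms, of x] by (metis add.right_inverse)

section \<open>Carlitz representations of permutations\<close>

definition carlitz_map :: "'a::field \<Rightarrow> 'a \<Rightarrow> 'a list \<Rightarrow> 'a \<Rightarrow> 'a" where
  "carlitz_map a0 a1 as x = foldl (\<lambda>y a. inverse y + a) (a0 * x + a1) as"

lemma carlitz_map_Nil [simp]: "carlitz_map a0 a1 [] x = a0 * x + a1"
  by (simp add: carlitz_map_def)

lemma carlitz_map_snoc [simp]:
  "carlitz_map a0 a1 (as @ [e]) x = inverse (carlitz_map a0 a1 as x) + e"
  by (simp add: carlitz_map_def)

lemma carlitz_map_append:
  "carlitz_map a0 a1 (as @ bs) x = foldl (\<lambda>y a. inverse y + a) (carlitz_map a0 a1 as x) bs"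
  by (simp add: carlitz_map_def)

text \<open>For \<open>q = 2\<close> the exponent \<open>q - 2\<close> is \<open>0\<close>, and \<open>0 ^ 0 = 1 \<noteq> inverse 0\<close>.\<close>
lemma carlitz_form_eq_carlitz_map:
  assumes "CARD('a::{field,finite}) \<ge> 3"
  shows "carlitz_form (a0::'a) a1 as = carlitz_map a0 a1 as"
  by (simp add: fun_eq_iff carlitz_form_def carlitz_map_def power_card_minus_2_eq_inverse[OF assms])

lemma inj_carlitz_map:
  assumes "a0 \<noteq> 0"
  shows "inj (carlitz_map a0 a1 as)"
proof (induction as rule: rev_induct)
  case Nil
  show ?case
    using assms by (intro injI) simp
next
  case (snoc e as)
  show ?case
  proof (rule injI)
    fix x y
    assume "carlitz_map a0 a1 (as @ [e]) x = carlitz_map a0 a1 (as @ [e]) y"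
    then have "carlitz_map a0 a1 as x = carlitz_map a0 a1 as y"
      by simp
    then show "x = y"
      by (rule injD[OF snoc.IH])
  qed
qed

lemma affine_comp_carlitz_map:
  assumes "a0 \<noteq> 0" and "u \<noteq> 0"
  shows "\<exists>b0 b1 bs. b0 \<noteq> 0 \<and> length bs = length as \<and>
           (\<lambda>x. u * carlitz_map a0 a1 as x + v) = carlitz_map b0 b1 bs"
  using assms(2)
proof (induction as arbitrary: u v rule: rev_induct)
  case Nil
  show ?case
    using Nil assms(1) by (intro exI[of _ "u * a0"] exI[of _ "u * a1 + v"] exI[of _ "[]"])
      (simp add: fun_eq_iff algebra_simps)
next
  case (snoc e as)
  obtain b0 b1 bs where b: "b0 \<noteq> 0" "length bs = length as"
    "(\<lambda>x. inverse u * carlitz_map a0 a1 as x + 0) = carlitz_map b0 b1 bs"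
    using snoc.IH[of "inverse u" 0] snoc.prems by auto
  have "u * carlitz_map a0 a1 (as @ [e]) x + v = carlitz_map b0 b1 (bs @ [u * e + v]) x" for x
    using fun_cong[OF b(3), of x, symmetric] by (simp add: algebra_simps)
  then show ?case
    using b(1,2) by (intro exI[of _ b0] exI[of _ b1] exI[of _ "bs @ [u * e + v]"]) auto
qed

definition carlitz_representable :: "('a::field \<Rightarrow> 'a) \<Rightarrow> bool" where
  "carlitz_representable f \<longleftrightarrow> (\<exists>a0 a1 as. a0 \<noteq> 0 \<and> f = carlitz_map a0 a1 as)"

lemma carlitz_representable_affine:
  assumes "u \<noteq> 0"
  shows "carlitz_representable (\<lambda>x. u * x + v)"
  unfolding carlitz_representable_def
  using assms by (intro exI[of _ u] exI[of _ v] exI[of _ "[]"]) (simp add: fun_eq_iff)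

lemma carlitz_representable_comp:
  assumes "carlitz_representable f" and "carlitz_representable g"
  shows "carlitz_representable (f \<circ> g)"
proof -
  obtain a0 a1 as where f: "a0 \<noteq> 0" "f = carlitz_map a0 a1 as"
    using assms(1) unfolding carlitz_representable_def by blast
  obtain b0 b1 bs where g: "b0 \<noteq> 0" "g = carlitz_map b0 b1 bs"
    using assms(2) unfolding carlitz_representable_def by blast
  obtain c0 c1 cs where c: "c0 \<noteq> 0" "(\<lambda>x. a0 * carlitz_map b0 b1 bs x + a1) = carlitz_map c0 c1 cs"
    using affine_comp_carlitz_map[OF g(1) f(1)] by blast
  have "f \<circ> g = carlitz_map c0 c1 (cs @ as)"
    by (simp add: fun_eq_iff f g carlitz_map_append flip: c(2)) (simp add: carlitz_map_def)
  then show ?thesis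
    using c(1) unfolding carlitz_representable_def by blast
qed

text \<open>In characteristic 2 the Moebius map \<open>y \<mapsto> 1/y + 1\<close> permutes \<open>\<infinity>, 0, 1\<close> cyclically
  and has order 3; with \<open>inverse 0 = 0\<close> its third iterate swaps \<open>0\<close> and \<open>1\<close> and fixes
  everything else.\<close>
lemma transpose_0_1_eq_carlitz_map:
  assumes "CHAR('a::field) = 2"
  shows "transpose 0 1 = carlitz_map (1::'a) 0 [1, 1, 1]"
proof
  fix x :: 'a
  have two: "y + y = 0" for y :: 'a
    using add_self_CHAR_2[OF assms] .
  show "transpose 0 1 x = carlitz_map 1 0 [1, 1, 1] x"
  proof (cases "x = 0 \<or> x = 1")
    case True
    then show ?thesis
      using two[of 1] by (auto simp: carlitz_map_def)
  next
    case False
    have "1 + x \<noteq> 0"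
      using False two[of 1] by (metis add.left_cancel)
    then have "inverse (inverse (inverse x + 1) + 1) + 1 = x"
      using False two[of 1] two[of x] by (simp add: field_simps)
    then show ?thesis
      using False by (simp add: carlitz_map_def)
  qed
qed

lemma carlitz_representable_transpose:
  assumes "CHAR('a::field) = 2"
  shows "carlitz_representable (transpose a (b::'a))"
proof (cases "a = b")
  case True
  then show ?thesis
    using carlitz_representable_affine[of 1 0] by (simp add: id_def)
next
  case False
  define h where "h x = (b - a) * x + a" for x
  define g where "g y = (y - a) / (b - a)" for y
  have "transpose a b y = h (transpose 0 1 (g y))" for y
  proof -
    consider "y = a" | "y = b" | "y \<noteq> a" "y \<noteq> b"
      by blast
    then show ?thesis
    proof cases
      case 3
      then have "g y \<noteq> 0" "g y \<noteq> 1" "h (g y) = y"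
        using False by (auto simp: g_def h_def field_simps)
      then show ?thesis
        using 3 by simp
    qed (use False in \<open>auto simp: g_def h_def field_simps\<close>)
  qed
  then have "transpose a b = h \<circ> transpose 0 1 \<circ> g"
    by (simp add: fun_eq_iff)
  moreover have "carlitz_representable (transpose (0::'a) 1)"
    unfolding carlitz_representable_def transpose_0_1_eq_carlitz_map[OF assms]
    using one_neq_zero by blast
  moreover have "carlitz_representable h"
    unfolding h_def[abs_def] using False by (simp add: carlitz_representable_affine)
  moreover have "g = (\<lambda>y. inverse (b - a) * y + - a / (b - a))"
    by (simp add: fun_eq_iff g_def diff_divide_distrib divide_inverse_commute right_diff_distrib)
  then have "carlitz_representable g"
    using False by (metis carlitz_representable_affine inverse_nonzero_iff_nonzero right_minus_eq)
  ultimately show ?thesis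
    by (simp add: carlitz_representable_comp)
qed

lemma carlitz_representable_if_bij:
  fixes F :: "'a::{field,finite} \<Rightarrow> 'a"
  assumes "CHAR('a) = 2" and "bij F"
  shows "carlitz_representable F"
proof -
  have "F permutes UNIV"
    using assms(2) by (simp add: permutes_univ bij_iff)
  from this finite_class.finite_UNIV show ?thesis
  proof (induction rule: permutes_induct)
    case id
    show ?case
      using carlitz_representable_affine[of 1 0] by (simp add: id_def)
  next
    case (swap a b p)
    then show ?case
      using carlitz_representable_comp carlitz_representable_transpose[OF assms(1)] by blast
  qed
qed

text \<open>A zero entry can be dropped together with the next one, since \<open>inverse (inverse y + 0) = y\<close>.\<close>
lemma carlitz_map_nonzero_entries:
  fixes a0 :: "'a::field"
  assumes "a0 \<noteq> 0"
  shows "\<exists>b0 b1 bs. b0 \<noteq> 0 \<and> (\<forall>i. i + 1 < length bs \<longrightarrow> bs ! i \<noteq> 0) \<and>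
           carlitz_map a0 a1 as = carlitz_map b0 b1 bs"
  using assms
proof (induction "length as" arbitrary: a0 a1 as rule: less_induct)
  case less
  show ?case
  proof (cases "\<forall>i. i + 1 < length as \<longrightarrow> as ! i \<noteq> 0")
    case True
    then show ?thesis
      using less.prems by blast
  next
    case False
    then obtain xs e ys where as: "as = xs @ 0 # e # ys"
      by (metis Cons_nth_drop_Suc Suc_eq_plus1 Suc_lessD append_take_drop_id)
    obtain c0 c1 cs where c: "c0 \<noteq> 0" "length cs = length xs"
      "(\<lambda>x. 1 * carlitz_map a0 a1 xs x + e) = carlitz_map c0 c1 cs"
      using affine_comp_carlitz_map[OF less.prems one_neq_zero] by blast
    have "carlitz_map a0 a1 as = carlitz_map c0 c1 (cs @ ys)"
      by (simp add: fun_eq_iff as carlitz_map_append flip: c(3))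
    moreover have "length (cs @ ys) < length as"
      using c(2) as by simp
    ultimately show ?thesis
      using less.hyps c(1) by metis
  qed
qed

lemma has_carlitz_rep_carlitz_rank:
  fixes F :: "'a::{field,finite} \<Rightarrow> 'a"
  assumes "CHAR('a) = 2" and "CARD('a) \<ge> 3" and "bij F"
  shows "has_carlitz_rep F (carlitz_rank F)"
proof -
  obtain a0 a1 as where "a0 \<noteq> 0" "F = carlitz_map a0 a1 as"
    using carlitz_representable_if_bij[OF assms(1,3)] unfolding carlitz_representable_def by blast
  then obtain b0 b1 bs where "b0 \<noteq> 0" "\<forall>i. i + 1 < length bs \<longrightarrow> bs ! i \<noteq> 0"
      "F = carlitz_map b0 b1 bs"
    using carlitz_map_nonzero_entries by metis
  then have "has_carlitz_rep F (length bs)"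
    unfolding has_carlitz_rep_def carlitz_form_eq_carlitz_map[OF assms(2)] by blast
  then show ?thesis
    unfolding carlitz_rank_def by (rule LeastI)
qed

section \<open>Solutions of Moebius relations along a Carlitz chain\<close>

text \<open>\<open>y'\<close> is the image of \<open>y \<noteq> -\<delta>/\<gamma>\<close> under the Moebius transformation with matrix
  \<open>[[\<alpha>, \<beta>], [\<gamma>, \<delta>]]\<close>.\<close>
definition moebius_rel :: "'a::field \<Rightarrow> 'a \<Rightarrow> 'a \<Rightarrow> 'a \<Rightarrow> 'a \<Rightarrow> 'a \<Rightarrow> bool" where
  "moebius_rel \<alpha> \<beta> \<gamma> \<delta> y y' \<longleftrightarrow> \<gamma> * y + \<delta> \<noteq> 0 \<and> y' * (\<gamma> * y + \<delta>) = \<alpha> * y + \<beta>"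

lemma moebius_rel_swap_imp_trace_zero:
  assumes "moebius_rel \<alpha> \<beta> \<gamma> \<delta> u v" and "moebius_rel \<alpha> \<beta> \<gamma> \<delta> v u" and "u \<noteq> v"
  shows "\<alpha> + \<delta> = 0"
proof -
  have "v * (\<gamma> * u + \<delta>) = \<alpha> * u + \<beta>" and "u * (\<gamma> * v + \<delta>) = \<alpha> * v + \<beta>"
    using assms(1,2) unfolding moebius_rel_def by auto
  moreover have "(\<alpha> + \<delta>) * (u - v)
      = (\<alpha> * u + \<beta> - v * (\<gamma> * u + \<delta>)) - (\<alpha> * v + \<beta> - u * (\<gamma> * v + \<delta>))"
    by (simp add: algebra_simps)
  ultimately have "(\<alpha> + \<delta>) * (u - v) = 0"
    by simp
  then show ?thesis
    using assms(3) by simp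
qed

text \<open>The new matrix is the conjugate of the old one by \<open>y \<mapsto> 1/y + e\<close>; in particular
  it has the same trace.\<close>
lemma moebius_rel_inverse_shift:
  assumes "y \<noteq> 0" and "y' \<noteq> 0"
    and "moebius_rel \<alpha> \<beta> \<gamma> \<delta> (inverse y + e) (inverse y' + e)"
  shows "moebius_rel (\<gamma> * e + \<delta>) \<gamma> (\<alpha> * e + \<beta> - e * (\<gamma> * e + \<delta>)) (\<alpha> - e * \<gamma>) y y'"
proof -
  have pole: "\<gamma> * (inverse y + e) + \<delta> \<noteq> 0"
    and rel: "(inverse y' + e) * (\<gamma> * (inverse y + e) + \<delta>) = \<alpha> * (inverse y + e) + \<beta>"
    using assms(3) unfolding moebius_rel_def by auto
  have clear_y: "y * (c * (inverse y + e) + d) = c + (c * e + d) * y" for c d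
    using assms(1) by (simp add: field_simps)
  have clear_y': "y' * (inverse y' + e) = 1 + e * y'"
    using assms(2) by (simp add: field_simps)
  have "(y' * (inverse y' + e)) * (y * (\<gamma> * (inverse y + e) + \<delta>))
      = y' * (y * (\<alpha> * (inverse y + e) + \<beta>))"
    using rel by (metis mult.assoc mult.left_commute)
  then have "(1 + e * y') * (\<gamma> + (\<gamma> * e + \<delta>) * y) = y' * (\<alpha> + (\<alpha> * e + \<beta>) * y)"
    unfolding clear_y clear_y' .
  then have eq: "y' * ((\<alpha> * e + \<beta> - e * (\<gamma> * e + \<delta>)) * y + (\<alpha> - e * \<gamma>))
      = (\<gamma> * e + \<delta>) * y + \<gamma>"
    by (simp add: algebra_simps)
  have "(\<gamma> * e + \<delta>) * y + \<gamma> = y * (\<gamma> * (inverse y + e) + \<delta>)"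
    using clear_y[of \<gamma> \<delta>] by (simp add: add.commute)
  then have "(\<gamma> * e + \<delta>) * y + \<gamma> \<noteq> 0"
    using pole assms(1) by simp
  with eq show ?thesis
    unfolding moebius_rel_def by auto
qed

lemma card_moebius_rel_translate_le_2:
  fixes \<alpha> :: "'a::field"
  assumes "\<alpha> \<noteq> \<delta>"
  shows "card {y. moebius_rel \<alpha> \<beta> \<gamma> \<delta> y (y + t)} \<le> 2"
proof -
  define p where "p = [: t * \<delta> - \<beta>, \<gamma> * t + \<delta> - \<alpha>, \<gamma> :]"
  have "p \<noteq> 0"
    using assms by (auto simp: p_def)
  have "{y. moebius_rel \<alpha> \<beta> \<gamma> \<delta> y (y + t)} \<subseteq> {y. poly p y = 0}"
    by (auto simp: moebius_rel_def p_def algebra_simps power2_eq_square)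
  then have "card {y. moebius_rel \<alpha> \<beta> \<gamma> \<delta> y (y + t)} \<le> card {y. poly p y = 0}"
    using \<open>p \<noteq> 0\<close> by (intro card_mono) (auto intro: poly_roots_finite)
  also have "\<dots> \<le> degree p"
    using card_poly_roots_bound[OF \<open>p \<noteq> 0\<close>] .
  also have "\<dots> \<le> 2"
    by (simp add: p_def)
  finally show ?thesis .
qed

lemma card_moebius_rel_affine_le_2:
  fixes a0 :: "'a::field"
  assumes "a0 \<noteq> 0" and "\<alpha> \<noteq> \<delta>"
  shows "card {x. moebius_rel \<alpha> \<beta> \<gamma> \<delta> (a0 * x + a1) (a0 * (x + a) + a1)} \<le> 2"
proof -
  let ?L = "\<lambda>x. a0 * x + a1"
  have "bij ?L"
    using assms(1) by (intro o_bij[where g = "\<lambda>y. (y - a1) / a0"]) (auto simp: fun_eq_iff)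
  have "card {x. moebius_rel \<alpha> \<beta> \<gamma> \<delta> (a0 * x + a1) (a0 * (x + a) + a1)}
      = card (?L -` {y. moebius_rel \<alpha> \<beta> \<gamma> \<delta> y (y + a0 * a)})"
    by (simp add: algebra_simps)
  also have "\<dots> = card {y. moebius_rel \<alpha> \<beta> \<gamma> \<delta> y (y + a0 * a)}"
    using \<open>bij ?L\<close> by (intro card_vimage_inj) (auto simp: bij_is_inj bij_is_surj)
  also have "\<dots> \<le> 2"
    using assms(2) by (rule card_moebius_rel_translate_le_2)
  finally show ?thesis .
qed

lemma card_moebius_rel_inverse_shift_le:
  fixes G :: "'a::{field,finite} \<Rightarrow> 'a"
  assumes "CHAR('a) = 2" and "inj G" and "\<alpha> + \<delta> \<noteq> 0"
  shows "card {x. moebius_rel \<alpha> \<beta> \<gamma> \<delta> (inverse (G x) + e) (inverse (G (x + a)) + e)}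
           \<le> card {x. moebius_rel (\<gamma> * e + \<delta>) \<gamma> (\<alpha> * e + \<beta> - e * (\<gamma> * e + \<delta>)) (\<alpha> - e * \<gamma>)
                       (G x) (G (x + a))} + 1"
    (is "card ?S \<le> card ?T + 1")
proof -
  have aa: "x + a + a = x" for x
    using add_self_CHAR_2[OF assms(1), of a] by (simp add: add.assoc)
  have "surj G"
    using assms(2) by (simp add: finite_UNIV_inj_surj)
  then obtain z where z: "G z = 0"
    using surjD[of G 0] by metis
  have G_eq_0: "G x = 0 \<longleftrightarrow> x = z" for x
    using inj_eq[OF assms(2), of x z] z by simp
  have outside: "x \<in> ?T" if "x \<in> ?S" "x \<noteq> z" "x \<noteq> z + a" for x
  proof -
    have "G x \<noteq> 0"
      using that(2) G_eq_0 by simp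
    moreover have "G (x + a) \<noteq> 0"
    proof
      assume "G (x + a) = 0"
      then have "x = z + a"
        using G_eq_0 aa[of x] by metis
      with that(3) show False ..
    qed
    ultimately show ?thesis
      using that(1) moebius_rel_inverse_shift by simp
  qed
  have not_both: "\<not> (z \<in> ?S \<and> z + a \<in> ?S)" if "a \<noteq> 0"
  proof
    let ?u = "inverse (G (z + a)) + e"
    assume "z \<in> ?S \<and> z + a \<in> ?S"
    then have "moebius_rel \<alpha> \<beta> \<gamma> \<delta> e ?u" and "moebius_rel \<alpha> \<beta> \<gamma> \<delta> ?u e"
      by (simp_all add: z aa)
    moreover have "e \<noteq> ?u"
      using G_eq_0[of "z + a"] that by simp
    ultimately have "\<alpha> + \<delta> = 0"
      by (rule moebius_rel_swap_imp_trace_zero)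
    with assms(3) show False ..
  qed
  consider "z \<notin> ?S" | "z + a \<notin> ?S" | "a = 0"
    using not_both by blast
  then obtain w where "?S \<subseteq> insert w ?T"
  proof cases
    case 1
    then show ?thesis
      using outside that[of "z + a"] by blast
  next
    case 2
    then show ?thesis
      using outside that[of z] by blast
  next
    case 3
    then show ?thesis
      using outside that[of z] by auto
  qed
  then have "card ?S \<le> card (insert w ?T)"
    by (intro card_mono) auto
  also have "\<dots> \<le> card ?T + 1"
    by (simp add: card_insert_if)
  finally show ?thesis .
qed

lemma card_moebius_rel_carlitz_map_le:
  fixes a0 :: "'a::{field,finite}"
  assumes "CHAR('a) = 2" and "a0 \<noteq> 0" and "\<alpha> + \<delta> \<noteq> 0"
  shows "card {x. moebius_rel \<alpha> \<beta> \<gamma> \<delta> (carlitz_map a0 a1 as x) (carlitz_map a0 a1 as (x + a))}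
           \<le> length as + 2"
  using assms(3)
proof (induction as arbitrary: \<alpha> \<beta> \<gamma> \<delta> rule: rev_induct)
  case Nil
  have "\<alpha> \<noteq> \<delta>"
    using Nil add_self_CHAR_2[OF assms(1), of \<alpha>] by auto
  then have "card {x. moebius_rel \<alpha> \<beta> \<gamma> \<delta> (a0 * x + a1) (a0 * (x + a) + a1)} \<le> 2"
    by (rule card_moebius_rel_affine_le_2[OF assms(2)])
  then show ?case
    by simp
next
  case (snoc e as)
  have "(\<gamma> * e + \<delta>) + (\<alpha> - e * \<gamma>) \<noteq> 0"
    using snoc.prems by (simp add: algebra_simps)
  then have "card {x. moebius_rel (\<gamma> * e + \<delta>) \<gamma> (\<alpha> * e + \<beta> - e * (\<gamma> * e + \<delta>)) (\<alpha> - e * \<gamma>)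
      (carlitz_map a0 a1 as x) (carlitz_map a0 a1 as (x + a))} \<le> length as + 2"
    by (rule snoc.IH)
  moreover have "card {x. moebius_rel \<alpha> \<beta> \<gamma> \<delta> (carlitz_map a0 a1 (as @ [e]) x)
      (carlitz_map a0 a1 (as @ [e]) (x + a))}
    \<le> card {x. moebius_rel (\<gamma> * e + \<delta>) \<gamma> (\<alpha> * e + \<beta> - e * (\<gamma> * e + \<delta>)) (\<alpha> - e * \<gamma>)
      (carlitz_map a0 a1 as x) (carlitz_map a0 a1 as (x + a))} + 1"
    using card_moebius_rel_inverse_shift_le[OF assms(1) inj_carlitz_map[OF assms(2)] snoc.prems]
    by simp
  ultimately show ?case
    by simp
qed

lemma c_diff_count_carlitz_map_le:
  fixes a0 :: "'a::{field,finite}"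
  assumes "CHAR('a) = 2" and "a0 \<noteq> 0" and "c \<noteq> 1"
  shows "c_diff_count (carlitz_map a0 a1 as) c a b \<le> length as + 2"
proof -
  have "c_diff_count (carlitz_map a0 a1 as) c a b
      = card {x. moebius_rel (- c) b 0 1 (carlitz_map a0 a1 as x) (carlitz_map a0 a1 as (x + a))}"
    unfolding c_diff_count_def moebius_rel_def by (simp add: algebra_simps)
  also have "\<dots> \<le> length as + 2"
    using assms(3) by (intro card_moebius_rel_carlitz_map_le[OF assms(1,2)]) simp
  finally show ?thesis .
qed

lemma c_diff_uniformity_le:
  fixes F :: "'a::{field,finite} \<Rightarrow> 'a"
  assumes "\<And>a b. c_diff_count F c a b \<le> k"
  shows "c_diff_uniformity F c \<le> k"
  unfolding c_diff_uniformity_def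
proof (rule Max.boundedI)
  show "finite {c_diff_count F c a b | a b. a \<noteq> 0 \<or> c \<noteq> 1}"
    by (rule finite_subset[of _ "(\<lambda>(a, b). c_diff_count F c a b) ` UNIV"]) auto
  show "{c_diff_count F c a b | a b. a \<noteq> 0 \<or> c \<noteq> 1} \<noteq> {}"
    using one_neq_zero by blast
qed (use assms in blast)

theorem mainTheorem5:
  fixes F :: "'a::{field,finite} \<Rightarrow> 'a" and c :: 'a and n m :: nat
  assumes "n \<ge> 1"
    and "CARD('a) = 2 ^ n"
    and "bij F"
    and "carlitz_rank F = m"
    and "c \<noteq> 1"
  shows "c_diff_uniformity F c \<le> m + 2"
proof (rule c_diff_uniformity_le)
  fix a b
  show "c_diff_count F c a b \<le> m + 2"
  proof (cases "n = 1")
    case True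
    have "c_diff_count F c a b \<le> CARD('a)"
      unfolding c_diff_count_def by (rule card_mono) auto
    then show ?thesis
      using True assms(2) by simp
  next
    case False
    have "2 ^ 2 \<le> (2::nat) ^ n"
      using False assms(1) by (intro power_increasing) auto
    then have card: "CARD('a) \<ge> 3"
      using assms(2) by simp
    have char: "CHAR('a) = 2"
      using assms(2) by (rule CHAR_eq_2_if_card_power_of_2)
    obtain a0 a1 as where "a0 \<noteq> 0" "length as = m" "F = carlitz_map a0 a1 as"
      using has_carlitz_rep_carlitz_rank[OF char card assms(3)]
      unfolding assms(4) has_carlitz_rep_def carlitz_form_eq_carlitz_map[OF card] by blast
    then show ?thesis
      using c_diff_count_carlitz_map_le[OF char _ assms(5)] by blast
  qed
qed

end
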